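(* Let $G$ be a graph all of whose internal vertices are of type $0$ or $1$, and let $n_0$ denote the maximum number of vertices of a connected component of $G_0$ (with $n_0=0$ if $G_0$ is the null graph). Then: (1) $G$ is well-covered if and only if $G_0$ is well-covered and for every independent set $I$ in $G_1$ of size at most $n_0$ we have $i(G_0-N(I))=\alpha(G_0)$; (2) $\mu_\alpha(G)\leq 1$ if and only if $\mu_\alpha(G_0)\leq 1$ and for every independent set $I$ in $G_1$ of size at most $2n_0$ we have $\alpha(G_0)-i(G_0-N(I))\leq 1$.
   Context: All graphs are finite and simple; the null graph is allowed. For a graph $F$, $\alpha(F)$ is the maximum size of an independent set, $i(F)$ the minimum size of an inclusion-maximal independent set (both $0$ for the null graph), $\mu_\alpha(F)=\alpha(F)-i(F)$, and $F$ is well-covered if $\mu_\alpha(F)=0$. $N(I)=\bigcup_{v\in I}N(v)$ and $G_0-N(I)$ is obtained from $G_0$ by deleting the vertices of $N(I)$. Types of vertices: let $U$ be the set of vertices of $G$ whose connected component is a complete graph. In $G-U$, vertices of degree $1$ are leaves and the others are internal vertices. An internal vertex adjacent to exactly $k$ leaves is of type $k$; every vertex of $U$ is of type $0$. $G_i$ denotes the subgraph of $G$ induced by all vertices of type $i$. *)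

theory Defs
  imports Main
begin

text \<open>Induced subgraphs are represented by their vertex sets S (with the same E).\<close>

definition simple_graph :: "'a set \<Rightarrow> ('a \<Rightarrow> 'a \<Rightarrow> bool) \<Rightarrow> bool" where
  "simple_graph V E \<longleftrightarrow> finite V \<and> (\<forall>u v. E u v \<longrightarrow> u \<in> V \<and> v \<in> V)
     \<and> (\<forall>u v. E u v \<longrightarrow> E v u) \<and> (\<forall>v. \<not> E v v)"

definition indep :: "'a set \<Rightarrow> ('a \<Rightarrow> 'a \<Rightarrow> bool) \<Rightarrow> 'a set \<Rightarrow> bool" where
  "indep S E I \<longleftrightarrow> I \<subseteq> S \<and> (\<forall>u\<in>I. \<forall>v\<in>I. \<not> E u v)"

definition maximal_indep :: "'a set \<Rightarrow> ('a \<Rightarrow> 'a \<Rightarrow> bool) \<Rightarrow> 'a set \<Rightarrow> bool" where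
  "maximal_indep S E I \<longleftrightarrow> indep S E I \<and> (\<forall>J. indep S E J \<and> I \<subseteq> J \<longrightarrow> J = I)"

definition alpha :: "'a set \<Rightarrow> ('a \<Rightarrow> 'a \<Rightarrow> bool) \<Rightarrow> nat" where
  "alpha S E = Max (card ` {I. indep S E I})"

definition imin :: "'a set \<Rightarrow> ('a \<Rightarrow> 'a \<Rightarrow> bool) \<Rightarrow> nat" where
  "imin S E = Min (card ` {I. maximal_indep S E I})"

definition mu_alpha :: "'a set \<Rightarrow> ('a \<Rightarrow> 'a \<Rightarrow> bool) \<Rightarrow> int" where
  "mu_alpha S E = int (alpha S E) - int (imin S E)"

definition well_covered :: "'a set \<Rightarrow> ('a \<Rightarrow> 'a \<Rightarrow> bool) \<Rightarrow> bool" where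
  "well_covered S E \<longleftrightarrow> mu_alpha S E = 0"

definition nbhd :: "'a set \<Rightarrow> ('a \<Rightarrow> 'a \<Rightarrow> bool) \<Rightarrow> 'a \<Rightarrow> 'a set" where
  "nbhd V E v = {u \<in> V. E v u}"

definition nbhd_set :: "'a set \<Rightarrow> ('a \<Rightarrow> 'a \<Rightarrow> bool) \<Rightarrow> 'a set \<Rightarrow> 'a set" where
  "nbhd_set V E I = (\<Union>v\<in>I. nbhd V E v)"

definition component :: "'a set \<Rightarrow> ('a \<Rightarrow> 'a \<Rightarrow> bool) \<Rightarrow> 'a \<Rightarrow> 'a set" where
  "component S E v = {w. (\<lambda>x y. x \<in> S \<and> y \<in> S \<and> E x y)\<^sup>*\<^sup>* v w}"

definition is_clique :: "('a \<Rightarrow> 'a \<Rightarrow> bool) \<Rightarrow> 'a set \<Rightarrow> bool" where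
  "is_clique E C \<longleftrightarrow> (\<forall>u\<in>C. \<forall>w\<in>C. u \<noteq> w \<longrightarrow> E u w)"

definition Uset :: "'a set \<Rightarrow> ('a \<Rightarrow> 'a \<Rightarrow> bool) \<Rightarrow> 'a set" where
  "Uset V E = {v \<in> V. is_clique E (component V E v)}"

definition degree :: "'a set \<Rightarrow> ('a \<Rightarrow> 'a \<Rightarrow> bool) \<Rightarrow> 'a \<Rightarrow> nat" where
  "degree S E v = card {u \<in> S. E v u}"

definition leaves :: "'a set \<Rightarrow> ('a \<Rightarrow> 'a \<Rightarrow> bool) \<Rightarrow> 'a set" where
  "leaves V E = {v \<in> V - Uset V E. degree (V - Uset V E) E v = 1}"

definition internal :: "'a set \<Rightarrow> ('a \<Rightarrow> 'a \<Rightarrow> bool) \<Rightarrow> 'a set" where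
  "internal V E = {v \<in> V - Uset V E. degree (V - Uset V E) E v \<noteq> 1}"

definition leaf_count :: "'a set \<Rightarrow> ('a \<Rightarrow> 'a \<Rightarrow> bool) \<Rightarrow> 'a \<Rightarrow> nat" where
  "leaf_count V E v = card {u \<in> leaves V E. E v u}"

text \<open>Vertex set of G_k: internal vertices of type k (plus U when k = 0).\<close>
definition type_set :: "'a set \<Rightarrow> ('a \<Rightarrow> 'a \<Rightarrow> bool) \<Rightarrow> nat \<Rightarrow> 'a set" where
  "type_set V E k = {v \<in> internal V E. leaf_count V E v = k} \<union> (if k = 0 then Uset V E else {})"

definition max_comp_size :: "'a set \<Rightarrow> ('a \<Rightarrow> 'a \<Rightarrow> bool) \<Rightarrow> nat" where
  "max_comp_size S E = Max (insert 0 ((\<lambda>v. card (component S E v)) ` S))"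

end

theory Submission
  imports Defs
begin

text \<open>In such a graph every vertex of \<open>G\<^sub>1\<close> has exactly one pendant leaf, and a leaf is
  adjacent only to its partner. Hence a maximal independent set of \<open>G\<close> consists of an
  independent set \<open>I\<close> of \<open>G\<^sub>1\<close>, the leaves of the vertices in \<open>G\<^sub>1 - I\<close>, and a maximal independent
  set of \<open>G\<^sub>0 - N(I)\<close>. So \<open>\<alpha>(G) = |G\<^sub>1| + \<alpha>(G\<^sub>0)\<close> and \<open>i(G) = |G\<^sub>1| + min\<^sub>I i(G\<^sub>0 - N(I))\<close>,
  and \<open>\<mu>\<^sub>\<alpha>(G) < k\<close> iff \<open>\<alpha>(G\<^sub>0) - i(G\<^sub>0 - N(I)) < k\<close> for every such \<open>I\<close>.
  The size bound \<open>|I| \<le> k n\<^sub>0\<close> comes from locality: the deficiency \<open>\<alpha>(W) - |J \<inter> W|\<close> of a maximal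
  independent set \<open>J\<close> of \<open>G\<^sub>0 - N(I)\<close> is additive over the components of \<open>G\<^sub>0\<close>, so a union \<open>W\<close> of
  at most \<open>k\<close> components already has deficiency \<open>k\<close>, and only the at most \<open>|W|\<close> vertices
  of \<open>I\<close> with a neighbour in \<open>W\<close> are needed to keep it.\<close>

section \<open>Independent sets\<close>

lemma finite_indep: "finite S \<Longrightarrow> indep S E I \<Longrightarrow> finite I"
  by (auto simp: indep_def intro: finite_subset)

lemma finite_Collect_indep: "finite S \<Longrightarrow> finite {I. indep S E I}"
  by (rule finite_subset[of _ "Pow S"]) (auto simp: indep_def)

lemma indep_empty [simp]: "indep S E {}"
  by (simp add: indep_def)

lemma indep_subset: "indep S E I \<Longrightarrow> J \<subseteq> I \<Longrightarrow> J \<subseteq> T \<Longrightarrow> indep T E J"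
  unfolding indep_def by blast

lemma card_le_alpha: "finite S \<Longrightarrow> indep S E I \<Longrightarrow> card I \<le> alpha S E"
  unfolding alpha_def by (rule Max_ge) (auto simp: finite_Collect_indep)

lemma indep_extends_to_maximal:
  assumes "finite S" and "indep S E I"
  obtains J where "maximal_indep S E J" and "I \<subseteq> J"
proof -
  have "\<exists>J. (indep S E J \<and> I \<subseteq> J) \<and> (\<forall>J'. indep S E J' \<and> I \<subseteq> J' \<longrightarrow> card J' \<le> card J)"
  proof (rule ex_has_greatest_nat[where b = "Suc (card S)"])
    show "\<forall>J. indep S E J \<and> I \<subseteq> J \<longrightarrow> card J < Suc (card S)"
      using \<open>finite S\<close> by (auto simp: indep_def intro: card_mono le_imp_less_Suc)
    show "indep S E I \<and> I \<subseteq> I" using \<open>indep S E I\<close> by simp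
  qed
  then obtain J where J: "indep S E J" "I \<subseteq> J"
    and largest: "\<And>J'. indep S E J' \<Longrightarrow> I \<subseteq> J' \<Longrightarrow> card J' \<le> card J" by blast
  have "maximal_indep S E J"
    unfolding maximal_indep_def
  proof (intro conjI allI impI J(1))
    fix J' assume J': "indep S E J' \<and> J \<subseteq> J'"
    with J(2) largest have "card J' \<le> card J" by blast
    with J' \<open>finite S\<close> show "J' = J"
      by (metis card_seteq finite_indep)
  qed
  with J(2) that show thesis by blast
qed

lemma imin_le_card: "finite S \<Longrightarrow> maximal_indep S E J \<Longrightarrow> imin S E \<le> card J"
  unfolding imin_def
  by (rule Min_le, rule finite_imageI, rule finite_subset[OF _ finite_Collect_indep])
     (auto simp: maximal_indep_def)

lemma imin_attained:
  assumes "finite S"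
  obtains J where "maximal_indep S E J" and "card J = imin S E"
proof -
  obtain J0 where "maximal_indep S E J0"
    using indep_extends_to_maximal[OF assms indep_empty] by blast
  have "imin S E \<in> card ` {I. maximal_indep S E I}"
    unfolding imin_def
    by (intro Min_in finite_imageI finite_subset[OF _ finite_Collect_indep[OF assms]])
       (use \<open>maximal_indep S E J0\<close> in \<open>auto simp: maximal_indep_def\<close>)
  with that show thesis by auto
qed

lemma alpha_attained:
  assumes "finite S"
  obtains J where "maximal_indep S E J" and "card J = alpha S E"
proof -
  have "alpha S E \<in> card ` {I. indep S E I}"
    unfolding alpha_def
    by (intro Max_in finite_imageI finite_Collect_indep assms) (use indep_empty in blast)
  then obtain I where I: "indep S E I" "card I = alpha S E" by auto
  then obtain J where J: "maximal_indep S E J" "I \<subseteq> J"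
    using indep_extends_to_maximal[OF assms] by blast
  have "card I \<le> card J"
    using J assms by (intro card_mono) (auto simp: maximal_indep_def intro: finite_indep)
  moreover have "card J \<le> alpha S E"
    using J(1) assms by (intro card_le_alpha) (auto simp: maximal_indep_def)
  ultimately have "card J = alpha S E" using I(2) by linarith
  with J(1) show thesis by (rule that)
qed

lemma imin_le_alpha:
  assumes "finite S"
  shows "imin S E \<le> alpha S E"
proof -
  obtain J where "maximal_indep S E J" "card J = alpha S E"
    using alpha_attained[OF assms] .
  with imin_le_card[OF assms, of E J] show ?thesis by simp
qed

lemma alpha_mono:
  assumes "finite T" and "S \<subseteq> T"
  shows "alpha S E \<le> alpha T E"
proof -
  obtain J where "maximal_indep S E J" "card J = alpha S E"
    using alpha_attained finite_subset[OF assms(2,1)] by blast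
  then show ?thesis
    using assms card_le_alpha[OF assms(1), of E J]
    by (auto simp: maximal_indep_def indep_def)
qed

lemma maximal_indep_iff_dominating:
  assumes "symp E" and "irreflp E"
  shows "maximal_indep X E I \<longleftrightarrow> indep X E I \<and> (\<forall>x\<in>X - I. \<exists>y\<in>I. E y x)"
proof (intro iffI conjI ballI)
  assume max: "maximal_indep X E I"
  then show "indep X E I" by (simp add: maximal_indep_def)
  fix x assume x: "x \<in> X - I"
  show "\<exists>y\<in>I. E y x"
  proof (rule ccontr)
    assume "\<not> (\<exists>y\<in>I. E y x)"
    with x \<open>indep X E I\<close> assms have "indep X E (insert x I)"
      by (auto simp: indep_def irreflpD dest: sympD)
    with max x show False by (auto simp: maximal_indep_def)
  qed
next
  assume "indep X E I \<and> (\<forall>x\<in>X - I. \<exists>y\<in>I. E y x)"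
  then show "maximal_indep X E I"
    unfolding maximal_indep_def indep_def by blast
qed

section \<open>Separated parts and components\<close>

definition separated :: "('a \<Rightarrow> 'a \<Rightarrow> bool) \<Rightarrow> 'a set \<Rightarrow> 'a set \<Rightarrow> bool" where
  "separated E X W \<longleftrightarrow> W \<subseteq> X \<and> (\<forall>x\<in>W. \<forall>y\<in>X - W. \<not> E x y \<and> \<not> E y x)"

lemma separated_Int: "separated E X W \<Longrightarrow> Y \<subseteq> X \<Longrightarrow> separated E Y (Y \<inter> W)"
  by (auto simp: separated_def)

lemma alpha_separated_split:
  assumes "finite X" and sep: "separated E X W"
  shows "alpha X E = alpha W E + alpha (X - W) E"
proof -
  have "finite W" using sep \<open>finite X\<close> by (auto simp: separated_def intro: finite_subset)
  obtain I where I: "maximal_indep X E I" "card I = alpha X E"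
    using alpha_attained[OF \<open>finite X\<close>] .
  then have "indep X E I" by (simp add: maximal_indep_def)
  have "alpha X E = card (I \<inter> W) + card (I - W)"
    using I(2) \<open>indep X E I\<close> \<open>finite X\<close> finite_indep card_Int_Diff by metis
  also have "\<dots> \<le> alpha W E + alpha (X - W) E"
    using \<open>finite W\<close> \<open>finite X\<close> \<open>indep X E I\<close>
    by (intro add_mono card_le_alpha) (auto simp: indep_def)
  finally have "alpha X E \<le> alpha W E + alpha (X - W) E" .
  moreover
  obtain I1 where I1: "maximal_indep W E I1" "card I1 = alpha W E"
    using alpha_attained[OF \<open>finite W\<close>] .
  obtain I2 where I2: "maximal_indep (X - W) E I2" "card I2 = alpha (X - W) E"
    using alpha_attained[of "X - W"] \<open>finite X\<close> by blast
  have "indep W E I1" "indep (X - W) E I2"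
    using I1(1) I2(1) by (simp_all add: maximal_indep_def)
  then have "indep X E (I1 \<union> I2)"
    using sep unfolding indep_def separated_def by blast
  then have "card (I1 \<union> I2) \<le> alpha X E"
    by (rule card_le_alpha[OF \<open>finite X\<close>])
  moreover have "card (I1 \<union> I2) = card I1 + card I2"
    using \<open>indep W E I1\<close> \<open>indep (X - W) E I2\<close> \<open>finite W\<close> \<open>finite X\<close>
    by (intro card_Un_disjoint) (auto simp: indep_def intro: finite_subset)
  ultimately show ?thesis using I1(2) I2(2) by simp
qed

lemma alpha_Un_separated:
  assumes "finite A" "separated E A W1" "separated E A W2" "W1 \<inter> W2 = {}"
  shows "alpha (W1 \<union> W2) E = alpha W1 E + alpha W2 E"
proof -
  have "finite (W1 \<union> W2)"
    using assms(1-3) by (auto simp: separated_def intro: finite_subset)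
  moreover have "separated E (W1 \<union> W2) W1" and "W1 \<union> W2 - W1 = W2"
    using assms(2-4) by (auto simp: separated_def)
  ultimately show ?thesis using alpha_separated_split[of "W1 \<union> W2" E W1] by simp
qed

lemma maximal_indep_Int_separated:
  assumes "symp E" "irreflp E" "separated E X W" "maximal_indep X E J"
  shows "maximal_indep W E (J \<inter> W)"
  using assms(3,4) unfolding maximal_indep_iff_dominating[OF assms(1,2)]
  by (simp add: separated_def indep_def) blast

lemma maximal_indep_Un_separated:
  assumes "symp E" "irreflp E" "separated E X W"
    and "maximal_indep W E J1" "maximal_indep (X - W) E J2"
  shows "maximal_indep X E (J1 \<union> J2)"
proof -
  have "indep W E J1" "indep (X - W) E J2"
    and dom1: "\<forall>x\<in>W - J1. \<exists>y\<in>J1. E y x" and dom2: "\<forall>x\<in>X - W - J2. \<exists>y\<in>J2. E y x"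
    using assms(4,5) unfolding maximal_indep_iff_dominating[OF assms(1,2)] by auto
  then have "indep X E (J1 \<union> J2)"
    using assms(3) unfolding indep_def separated_def by blast
  moreover have "\<exists>y\<in>J1 \<union> J2. E y x" if "x \<in> X - (J1 \<union> J2)" for x
    using that dom1 dom2 by (cases "x \<in> W") auto
  ultimately show ?thesis unfolding maximal_indep_iff_dominating[OF assms(1,2)] by blast
qed

lemma self_in_component: "v \<in> component A E v"
  by (simp add: component_def)

lemma component_subset_separated:
  assumes "separated E A X" and "v \<in> X"
  shows "component A E v \<subseteq> X"
proof
  fix w assume "w \<in> component A E v"
  then have "(\<lambda>x y. x \<in> A \<and> y \<in> A \<and> E x y)\<^sup>*\<^sup>* v w" by (simp add: component_def)
  then show "w \<in> X" by (induction rule: rtranclp_induct) (use assms in \<open>auto simp: separated_def\<close>)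
qed

lemma separated_component:
  assumes "symp E" and "v \<in> A"
  shows "separated E A (component A E v)"
proof -
  have "component A E v \<subseteq> A"
    using component_subset_separated[of E A A v] assms(2) by (simp add: separated_def)
  moreover have "\<not> E x y" if "x \<in> component A E v" "y \<in> A - component A E v" for x y
    using that \<open>component A E v \<subseteq> A\<close>
    by (auto simp: component_def intro: rtranclp.rtrancl_into_rtrancl)
  ultimately show ?thesis using assms(1) unfolding separated_def by (blast dest: sympD)
qed

lemma card_component_le_max_comp_size:
  "finite A \<Longrightarrow> v \<in> A \<Longrightarrow> card (component A E v) \<le> max_comp_size A E"
  unfolding max_comp_size_def by (rule Max_ge) auto

lemma component_of_separated:
  assumes "finite A" "symp E" "separated E A X" "v \<in> X"
  shows "separated E A (component A E v)" "component A E v \<subseteq> X"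
    "separated E A (X - component A E v)" "card (X - component A E v) < card X"
    "card (component A E v) \<le> max_comp_size A E"
proof -
  have "X \<subseteq> A" "finite X"
    using assms(1,3) by (auto simp: separated_def intro: finite_subset)
  show sep: "separated E A (component A E v)"
    using assms(2,4) \<open>X \<subseteq> A\<close> by (blast intro: separated_component)
  show sub: "component A E v \<subseteq> X" by (rule component_subset_separated[OF assms(3,4)])
  show "separated E A (X - component A E v)"
    using sep sub assms(3) by (auto simp: separated_def)
  show "card (X - component A E v) < card X"
    using \<open>finite X\<close> assms(4) self_in_component[of v A E] by (intro psubset_card_mono) auto
  show "card (component A E v) \<le> max_comp_size A E"
    using assms(1,4) \<open>X \<subseteq> A\<close> by (blast intro: card_component_le_max_comp_size)
qed

definition deficiency :: "('a \<Rightarrow> 'a \<Rightarrow> bool) \<Rightarrow> 'a set \<Rightarrow> 'a set \<Rightarrow> nat" where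
  "deficiency E J W = alpha W E - card (J \<inter> W)"

lemma card_Int_le_alpha: "finite W \<Longrightarrow> indep A E J \<Longrightarrow> card (J \<inter> W) \<le> alpha W E"
  by (intro card_le_alpha) (auto simp: indep_def)

lemma deficiency_Un_separated:
  assumes "finite A" "indep A E J" "separated E A W1" "separated E A W2" "W1 \<inter> W2 = {}"
  shows "deficiency E J (W1 \<union> W2) = deficiency E J W1 + deficiency E J W2"
proof -
  have "finite W1" "finite W2"
    using assms(1,3,4) by (auto simp: separated_def intro: finite_subset)
  then have "card (J \<inter> (W1 \<union> W2)) = card (J \<inter> W1) + card (J \<inter> W2)"
    using assms(5) by (subst Int_Un_distrib, intro card_Un_disjoint) auto
  moreover have "card (J \<inter> W1) \<le> alpha W1 E" "card (J \<inter> W2) \<le> alpha W2 E"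
    using \<open>finite W1\<close> \<open>finite W2\<close> assms(2) by (auto intro: card_Int_le_alpha)
  ultimately show ?thesis
    using alpha_Un_separated[OF assms(1,3-5)] by (simp add: deficiency_def)
qed

text \<open>Components are split off one at a time and kept only if their deficiency is positive.\<close>
lemma deficiency_within_few_components:
  assumes "finite A" "symp E" "indep A E J"
  shows "separated E A X \<Longrightarrow> k \<le> deficiency E J X \<Longrightarrow>
    \<exists>W. separated E A W \<and> W \<subseteq> X \<and> card W \<le> k * max_comp_size A E \<and> k \<le> deficiency E J W"
proof (induction "card X" arbitrary: X k rule: less_induct)
  case less
  show ?case
  proof (cases "k = 0 \<or> X = {}")
    case True
    with less.prems show ?thesis by (intro exI[of _ "{}"]) (auto simp: separated_def)
  next
    case False
    then obtain v where "v \<in> X" and "k > 0" by blast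
    define C where "C = component A E v"
    note C = component_of_separated[OF assms(1,2) less.prems(1) \<open>v \<in> X\<close>, folded C_def]
    define d where "d = deficiency E J C"
    have "deficiency E J (C \<union> (X - C)) = d + deficiency E J (X - C)"
      using deficiency_Un_separated[OF assms(1,3) C(1,3)] unfolding d_def by blast
    moreover have "C \<union> (X - C) = X" using C(2) by blast
    ultimately have "deficiency E J X = d + deficiency E J (X - C)" by simp
    show ?thesis
    proof (cases "k \<le> d")
      case True
      have "max_comp_size A E \<le> k * max_comp_size A E" using \<open>k > 0\<close> by simp
      with C(5) have "card C \<le> k * max_comp_size A E" by linarith
      with True C(1,2) show ?thesis unfolding d_def by blast
    next
      case False
      with less.prems(2) \<open>deficiency E J X = d + deficiency E J (X - C)\<close>
      have "k - d \<le> deficiency E J (X - C)" by linarith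
      then obtain W' where W': "separated E A W'" "W' \<subseteq> X - C"
        "card W' \<le> (k - d) * max_comp_size A E" "k - d \<le> deficiency E J W'"
        using less.hyps[OF C(4,3)] by blast
      show ?thesis
      proof (cases "d = 0")
        case True
        with W' show ?thesis by auto
      next
        case False
        have "separated E A (C \<union> W')" using C(1) W'(1) by (auto simp: separated_def)
        moreover have "C \<union> W' \<subseteq> X" using W'(2) C(2) by blast
        moreover have "card (C \<union> W') \<le> k * max_comp_size A E"
        proof -
          have "card (C \<union> W') \<le> (1 + (k - d)) * max_comp_size A E"
            using card_Un_le[of C W'] C(5) W'(3) by simp
          also have "\<dots> \<le> k * max_comp_size A E"
            using False \<open>\<not> k \<le> d\<close> by (intro mult_le_mono1) linarith
          finally show ?thesis .
        qed
        moreover have "k \<le> deficiency E J (C \<union> W')"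
        proof -
          have "C \<inter> W' = {}" using W'(2) by blast
          then have "deficiency E J (C \<union> W') = d + deficiency E J W'"
            using deficiency_Un_separated[OF assms(1,3) C(1) W'(1)] unfolding d_def by simp
          with W'(4) \<open>\<not> k \<le> d\<close> show ?thesis by linarith
        qed
        ultimately show ?thesis by blast
      qed
    qed
  qed
qed

lemma nbhd_set_cover:
  assumes "finite W"
  obtains I' where "I' \<subseteq> I" "card I' \<le> card W" "nbhd_set V E I \<inter> W \<subseteq> nbhd_set V E I'"
proof -
  have "\<forall>w\<in>nbhd_set V E I \<inter> W. \<exists>v\<in>I. w \<in> nbhd V E v"
    by (auto simp: nbhd_set_def)
  then obtain g where g: "\<And>w. w \<in> nbhd_set V E I \<inter> W \<Longrightarrow> g w \<in> I \<and> w \<in> nbhd V E (g w)"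
    by metis
  have "card (g ` (nbhd_set V E I \<inter> W)) \<le> card W"
    using assms card_image_le[of "nbhd_set V E I \<inter> W" g] card_mono[of W "nbhd_set V E I \<inter> W"]
    by auto
  moreover have "nbhd_set V E I \<inter> W \<subseteq> nbhd_set V E (g ` (nbhd_set V E I \<inter> W))"
    using g by (auto simp: nbhd_set_def)
  ultimately show thesis using g by (intro that[of "g ` (nbhd_set V E I \<inter> W)"]) auto
qed

lemma imin_deficiency_small_witness:
  assumes "finite A" "symp E" "irreflp E"
    and J: "maximal_indep (A - nbhd_set V E I) E J" and deficient: "card J + k \<le> alpha A E"
  obtains I' where "I' \<subseteq> I" "card I' \<le> k * max_comp_size A E"
    "imin (A - nbhd_set V E I') E + k \<le> alpha A E"
proof -
  have "indep A E J" and J_sub: "J \<subseteq> A - nbhd_set V E I"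
    using J by (auto simp: maximal_indep_def indep_def)
  have "J \<inter> A = J" using J_sub by blast
  with deficient have "k \<le> deficiency E J A" by (simp add: deficiency_def)
  moreover have "separated E A A" by (simp add: separated_def)
  ultimately obtain W where W: "separated E A W" "card W \<le> k * max_comp_size A E"
    "k \<le> deficiency E J W"
    using deficiency_within_few_components[OF assms(1,2) \<open>indep A E J\<close>] by blast
  have "finite W" using W(1) \<open>finite A\<close> by (auto simp: separated_def intro: finite_subset)
  have "card (J \<inter> W) + k \<le> alpha W E"
    using W(3) card_Int_le_alpha[OF \<open>finite W\<close> \<open>indep A E J\<close>] by (simp add: deficiency_def)
  obtain I' where I': "I' \<subseteq> I" "card I' \<le> card W" "nbhd_set V E I \<inter> W \<subseteq> nbhd_set V E I'"
    using nbhd_set_cover[OF \<open>finite W\<close>] .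
  define S where "S = A - nbhd_set V E I'"
  have "nbhd_set V E I' \<subseteq> nbhd_set V E I" using I'(1) by (auto simp: nbhd_set_def)
  \<comment> \<open>inside \<open>W\<close> nothing changes, so \<open>J \<inter> W\<close> stays maximal there\<close>
  with I'(3) have S_W: "S \<inter> W = (A - nbhd_set V E I) \<inter> W" unfolding S_def by blast
  have "maximal_indep ((A - nbhd_set V E I) \<inter> W) E (J \<inter> ((A - nbhd_set V E I) \<inter> W))"
    by (rule maximal_indep_Int_separated[OF assms(2,3) separated_Int[OF W(1)] J]) blast
  moreover have "J \<inter> ((A - nbhd_set V E I) \<inter> W) = J \<inter> W" using J_sub by blast
  ultimately have max_W: "maximal_indep (S \<inter> W) E (J \<inter> W)" by (simp add: S_W)
  have sep_S: "separated E S (S \<inter> W)" by (rule separated_Int[OF W(1)]) (auto simp: S_def)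
  have "finite S" using \<open>finite A\<close> by (simp add: S_def)
  then have "finite (S - S \<inter> W)" by simp
  then obtain M where M: "maximal_indep (S - S \<inter> W) E M"
    by (meson indep_extends_to_maximal indep_empty)
  have "maximal_indep S E (J \<inter> W \<union> M)"
    by (rule maximal_indep_Un_separated[OF assms(2,3) sep_S max_W M])
  then have "imin S E \<le> card (J \<inter> W \<union> M)" by (rule imin_le_card[OF \<open>finite S\<close>])
  also have "\<dots> \<le> card (J \<inter> W) + card M" by (rule card_Un_le)
  also have "card M \<le> alpha (A - W) E"
    using M \<open>finite A\<close> by (intro card_le_alpha) (auto simp: maximal_indep_def indep_def S_def)
  finally have "imin S E + k \<le> alpha W E + alpha (A - W) E"
    using \<open>card (J \<inter> W) + k \<le> alpha W E\<close> by linarith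
  also have "\<dots> = alpha A E" using alpha_separated_split[OF \<open>finite A\<close> W(1)] by simp
  finally have "imin S E + k \<le> alpha A E" .
  moreover have "card I' \<le> k * max_comp_size A E" using I'(2) W(2) by linarith
  ultimately show thesis using I'(1) that unfolding S_def by blast
qed

section \<open>Graphs with pendant leaves\<close>

text \<open>\<open>A\<close>, \<open>B\<close>, \<open>L\<close> play the roles of \<open>G\<^sub>0\<close>, \<open>G\<^sub>1\<close> and the leaves; \<open>f\<close> maps a vertex of \<open>G\<^sub>1\<close> to its leaf.\<close>

locale pendant_leaves =
  fixes V :: "'a set" and E :: "'a \<Rightarrow> 'a \<Rightarrow> bool" and A B L :: "'a set" and f :: "'a \<Rightarrow> 'a"
  assumes graph: "simple_graph V E"
    and partition: "V = A \<union> B \<union> L" "A \<inter> B = {}" "A \<inter> L = {}" "B \<inter> L = {}"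
    and leaf_bij: "bij_betw f B L"
    and edge_leaf: "\<And>b. b \<in> B \<Longrightarrow> E b (f b)"
    and leaf_edge: "\<And>l q. l \<in> L \<Longrightarrow> E l q \<Longrightarrow> q \<in> B \<and> f q = l"
begin

lemma finite_parts: "finite A" "finite B" "finite L"
  using graph partition(1) by (auto simp: simple_graph_def)

lemma finite_V: "finite V"
  using graph by (simp add: simple_graph_def)

lemma symp: "symp E" and irreflp: "irreflp E"
  using graph by (auto simp: simple_graph_def symp_def irreflp_def)


lemma leaf_image: "f ` B = L"
  using leaf_bij by (simp add: bij_betw_def)

lemma leaf_edge_unique:
  assumes "b \<in> B" and "E (f b) q"
  shows "q = b"
proof -
  have "q \<in> B" "f q = f b"
    using leaf_edge[OF _ assms(2)] assms(1) leaf_image by blast+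
  then show ?thesis using assms(1) leaf_bij by (auto simp: bij_betw_def dest: inj_onD)
qed

lemma indep_extend_by_leaves:
  assumes I: "indep B E I" and J: "indep (A - nbhd_set V E I) E J"
  shows "indep V E (I \<union> J \<union> f ` (B - I))"
    (is "indep V E ?S")
proof -
  have "I \<subseteq> B" and indep_I: "\<forall>u\<in>I. \<forall>v\<in>I. \<not> E u v" using I by (auto simp: indep_def)
  have J_sub: "J \<subseteq> A - nbhd_set V E I" and indep_J: "\<forall>u\<in>J. \<forall>v\<in>J. \<not> E u v"
    using J by (auto simp: indep_def)
  have "f ` (B - I) \<subseteq> L" using leaf_image by blast
  have leaves_isolated: "\<not> E (f b) w" "\<not> E w (f b)" if "b \<in> B - I" "w \<in> ?S" for b w
  proof -
    have "b \<notin> ?S"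
      using that(1) J_sub \<open>f ` (B - I) \<subseteq> L\<close> partition(2,4) by blast
    then show "\<not> E (f b) w" using that leaf_edge_unique by blast
    then show "\<not> E w (f b)" using symp by (blast dest: sympD)
  qed
  have no_I_J: "\<not> E u v" if "u \<in> I" "v \<in> J" for u v
    using that J_sub partition(1) by (auto simp: nbhd_set_def nbhd_def)
  have "\<not> E u v" if u: "u \<in> ?S" and v: "v \<in> ?S" for u v
  proof -
    consider "u \<in> f ` (B - I)" | "v \<in> f ` (B - I)" | "u \<in> I \<union> J" "v \<in> I \<union> J"
      using u v by blast
    then show ?thesis
    proof cases
      case 3
      then show ?thesis using indep_I indep_J no_I_J symp by (blast dest: sympD)
    qed (use u v leaves_isolated in blast)+
  qed
  moreover have "?S \<subseteq> V"
    using \<open>I \<subseteq> B\<close> J_sub \<open>f ` (B - I) \<subseteq> L\<close> partition(1) by blast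
  ultimately show ?thesis unfolding indep_def by blast
qed

lemma maximal_indep_extend_by_leaves:
  assumes I: "indep B E I" and J: "maximal_indep (A - nbhd_set V E I) E J"
  shows "maximal_indep V E (I \<union> J \<union> f ` (B - I))"
    (is "maximal_indep V E ?S")
proof -
  have dom_J: "\<forall>x\<in>A - nbhd_set V E I - J. \<exists>y\<in>J. E y x"
    using J unfolding maximal_indep_iff_dominating[OF symp irreflp] by blast
  have "\<exists>y\<in>?S. E y x" if x: "x \<in> V - ?S" for x
  proof -
    consider "x \<in> B" | "x \<in> L" | "x \<in> A" using x partition(1) by blast
    then show ?thesis
    proof cases
      case 1
      with x have "f x \<in> ?S" by blast
      then show ?thesis using edge_leaf[OF 1] symp by (blast dest: sympD)
    next
      case 2
      then obtain b where "b \<in> B" "x = f b" using leaf_image by blast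
      with x have "b \<in> I" by blast
      then show ?thesis using edge_leaf[OF \<open>b \<in> B\<close>] \<open>x = f b\<close> by blast
    next
      case 3
      show ?thesis
      proof (cases "x \<in> nbhd_set V E I")
        case True
        then show ?thesis by (auto simp: nbhd_set_def nbhd_def)
      next
        case False
        with 3 x dom_J show ?thesis by blast
      qed
    qed
  qed
  moreover have "indep V E ?S"
    using J by (intro indep_extend_by_leaves[OF I]) (simp add: maximal_indep_def)
  ultimately show ?thesis unfolding maximal_indep_iff_dominating[OF symp irreflp] by blast
qed

lemma card_extend_by_leaves:
  assumes "I \<subseteq> B" "J \<subseteq> A"
  shows "card (I \<union> J \<union> f ` (B - I)) = card B + card J"
proof -
  have "finite I" "finite J" using assms finite_parts finite_subset by blast+
  have "f ` (B - I) \<subseteq> L" using leaf_image by blast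
  have "inj_on f (B - I)" using leaf_bij by (auto simp: bij_betw_def intro: inj_on_subset)
  then have "card (f ` (B - I)) = card B - card I"
    using assms(1) finite_parts(2) by (simp add: card_image card_Diff_subset \<open>finite I\<close>)
  moreover have "card (I \<union> J \<union> f ` (B - I)) = card I + card J + card (f ` (B - I))"
  proof -
    have "(I \<union> J) \<inter> f ` (B - I) = {}" "I \<inter> J = {}"
      using assms \<open>f ` (B - I) \<subseteq> L\<close> partition(2-4) by blast+
    then show ?thesis
      using \<open>finite I\<close> \<open>finite J\<close> finite_parts(2) by (simp add: card_Un_disjoint)
  qed
  moreover have "card I \<le> card B" using assms(1) finite_parts(2) by (rule card_mono[rotated])
  ultimately show ?thesis by linarith
qed

lemma maximal_indep_decompose:
  assumes S: "maximal_indep V E S"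
  obtains I J where "indep B E I" "maximal_indep (A - nbhd_set V E I) E J"
    "S = I \<union> J \<union> f ` (B - I)"
proof -
  define I where "I = S \<inter> B"
  have "indep V E S" using S by (simp add: maximal_indep_def)
  then have "indep B E I" unfolding I_def by (rule indep_subset) auto
  have "indep (A - nbhd_set V E I) E (S \<inter> A)"
    using \<open>indep V E S\<close> by (auto simp: indep_def I_def nbhd_set_def nbhd_def)
  \<comment> \<open>extend \<open>S \<inter> A\<close> and let the maximality of \<open>S\<close> force equality\<close>
  then obtain J where J: "maximal_indep (A - nbhd_set V E I) E J" "S \<inter> A \<subseteq> J"
    using indep_extends_to_maximal finite_parts(1) by (metis finite_Diff)
  have max_ext: "maximal_indep V E (I \<union> J \<union> f ` (B - I))"
    by (rule maximal_indep_extend_by_leaves[OF \<open>indep B E I\<close> J(1)])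
  have "S \<inter> L \<subseteq> f ` (B - I)"
  proof
    fix x assume x: "x \<in> S \<inter> L"
    then obtain b where b: "b \<in> B" "x = f b" using leaf_image by blast
    have "b \<notin> S" using x b edge_leaf[OF b(1)] \<open>indep V E S\<close> by (auto simp: indep_def)
    with b show "x \<in> f ` (B - I)" unfolding I_def by blast
  qed
  then have "S \<subseteq> I \<union> J \<union> f ` (B - I)"
    using J(2) \<open>indep V E S\<close> partition(1) unfolding I_def indep_def by blast
  moreover have "indep V E (I \<union> J \<union> f ` (B - I))"
    using max_ext by (simp add: maximal_indep_def)
  ultimately have "S = I \<union> J \<union> f ` (B - I)"
    using S unfolding maximal_indep_def by blast
  with \<open>indep B E I\<close> J(1) show thesis by (rule that)
qed

lemma alpha_eq_card_add_alpha: "alpha V E = card B + alpha A E"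
proof (rule antisym)
  obtain S where S: "maximal_indep V E S" "card S = alpha V E"
    using alpha_attained[OF finite_V] .
  obtain I J where I: "indep B E I" and J: "maximal_indep (A - nbhd_set V E I) E J"
    and S_eq: "S = I \<union> J \<union> f ` (B - I)"
    by (rule maximal_indep_decompose[OF S(1)])
  have "I \<subseteq> B" "J \<subseteq> A" using I J by (auto simp: indep_def maximal_indep_def)
  moreover have "card J \<le> alpha A E"
    using J finite_parts(1) by (intro card_le_alpha) (auto simp: maximal_indep_def indep_def)
  ultimately show "alpha V E \<le> card B + alpha A E"
    using S(2) S_eq card_extend_by_leaves by simp
next
  obtain J where J: "maximal_indep A E J" "card J = alpha A E"
    using alpha_attained[OF finite_parts(1)] .
  then have "maximal_indep V E ({} \<union> J \<union> f ` (B - {}))"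
    by (intro maximal_indep_extend_by_leaves) (simp_all add: nbhd_set_def)
  then have "card ({} \<union> J \<union> f ` (B - {})) \<le> alpha V E"
    by (intro card_le_alpha[OF finite_V]) (simp add: maximal_indep_def)
  moreover have "J \<subseteq> A" using J(1) by (simp add: maximal_indep_def indep_def)
  ultimately show "card B + alpha A E \<le> alpha V E"
    using card_extend_by_leaves[of "{}" J] J(2) by simp
qed

lemma imin_le_card_add_imin:
  assumes I: "indep B E I"
  shows "imin V E \<le> card B + imin (A - nbhd_set V E I) E"
proof -
  obtain J where J: "maximal_indep (A - nbhd_set V E I) E J"
    "card J = imin (A - nbhd_set V E I) E"
    using imin_attained finite_parts(1) by (metis finite_Diff)
  have "I \<subseteq> B" "J \<subseteq> A" using I J(1) by (auto simp: indep_def maximal_indep_def)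
  have "imin V E \<le> card (I \<union> J \<union> f ` (B - I))"
    by (rule imin_le_card[OF finite_V maximal_indep_extend_by_leaves[OF I J(1)]])
  with card_extend_by_leaves[OF \<open>I \<subseteq> B\<close> \<open>J \<subseteq> A\<close>] J(2) show ?thesis by simp
qed

lemma imin_eq_card_add_imin:
  obtains I where "indep B E I" "imin V E = card B + imin (A - nbhd_set V E I) E"
proof -
  obtain S where S: "maximal_indep V E S" "card S = imin V E"
    using imin_attained[OF finite_V] .
  obtain I J where I: "indep B E I" and J: "maximal_indep (A - nbhd_set V E I) E J"
    and S_eq: "S = I \<union> J \<union> f ` (B - I)"
    by (rule maximal_indep_decompose[OF S(1)])
  have "I \<subseteq> B" "J \<subseteq> A" using I J by (auto simp: indep_def maximal_indep_def)
  then have "imin V E = card B + card J" using S(2) S_eq card_extend_by_leaves by simp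
  moreover have "imin (A - nbhd_set V E I) E \<le> card J"
    using J finite_parts(1) by (intro imin_le_card) auto
  ultimately have "imin V E = card B + imin (A - nbhd_set V E I) E"
    using imin_le_card_add_imin[OF I] by linarith
  with I show thesis by (rule that)
qed

theorem alpha_less_imin_add_iff:
  "alpha V E < imin V E + k \<longleftrightarrow>
    (\<forall>I. indep B E I \<and> card I \<le> k * max_comp_size A E \<longrightarrow>
      alpha A E < imin (A - nbhd_set V E I) E + k)"
proof -
  obtain I0 where I0: "indep B E I0" "imin V E = card B + imin (A - nbhd_set V E I0) E"
    by (rule imin_eq_card_add_imin)
  have "alpha A E < imin (A - nbhd_set V E I) E + k"
    if "alpha A E < imin (A - nbhd_set V E I0) E + k" "indep B E I" for I
    using that imin_le_card_add_imin[of I] I0(2) by linarith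
  moreover have "alpha A E < imin (A - nbhd_set V E I0) E + k"
    if all: "\<forall>I. indep B E I \<and> card I \<le> k * max_comp_size A E \<longrightarrow>
      alpha A E < imin (A - nbhd_set V E I) E + k"
  proof (rule ccontr)
    assume "\<not> ?thesis"
    obtain J where J: "maximal_indep (A - nbhd_set V E I0) E J"
      "card J = imin (A - nbhd_set V E I0) E"
      using imin_attained finite_parts(1) by (metis finite_Diff)
    with \<open>\<not> ?thesis\<close> have "card J + k \<le> alpha A E" by linarith
    then obtain I' where "I' \<subseteq> I0" "card I' \<le> k * max_comp_size A E"
      "imin (A - nbhd_set V E I') E + k \<le> alpha A E"
      by (rule imin_deficiency_small_witness[OF finite_parts(1) symp irreflp J(1)])
    moreover have "indep B E I'"
      using I0(1) \<open>I' \<subseteq> I0\<close> by (auto simp: indep_def)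
    ultimately show False using all by (meson not_less)
  qed
  moreover have "alpha V E < imin V E + k \<longleftrightarrow> alpha A E < imin (A - nbhd_set V E I0) E + k"
    using alpha_eq_card_add_alpha I0(2) by simp
  ultimately show ?thesis by blast
qed

end

section \<open>The vertex types\<close>

text \<open>Meaningful only on vertices of type 1, which have exactly one leaf neighbour.\<close>
definition leaf_partner :: "'a set \<Rightarrow> ('a \<Rightarrow> 'a \<Rightarrow> bool) \<Rightarrow> 'a \<Rightarrow> 'a" where
  "leaf_partner V E b = (SOME l. l \<in> leaves V E \<and> E b l)"

context
  fixes V :: "'a set" and E :: "'a \<Rightarrow> 'a \<Rightarrow> bool"
  assumes graph: "simple_graph V E"
begin

lemma Uset_closed_under_edges:
  assumes "u \<in> Uset V E" and "E x u"
  shows "x \<in> Uset V E"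
proof -
  let ?R = "\<lambda>x y. x \<in> V \<and> y \<in> V \<and> E x y"
  have "x \<in> V" "u \<in> V" "?R x u" "?R u x"
    using graph assms by (auto simp: simple_graph_def)
  then have "component V E x = component V E u"
    unfolding component_def by (auto intro: converse_rtranclp_into_rtranclp)
  with assms(1) \<open>x \<in> V\<close> show ?thesis by (simp add: Uset_def)
qed

lemma leaf_unique_neighbour:
  assumes "l \<in> leaves V E"
  shows "\<exists>!p. E l p"
proof -
  have l: "l \<notin> Uset V E" "card {u \<in> V - Uset V E. E l u} = 1"
    using assms by (auto simp: leaves_def degree_def)
  then obtain p where p: "{u \<in> V - Uset V E. E l u} = {p}" by (metis card_1_singletonE)
  have "q = p" if "E l q" for q
  proof -
    have "q \<in> V" using that graph by (simp add: simple_graph_def)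
    moreover have "q \<notin> Uset V E" using that l(1) Uset_closed_under_edges[of q l] by blast
    ultimately have "q \<in> {u \<in> V - Uset V E. E l u}" using that by blast
    with p show ?thesis by blast
  qed
  moreover have "E l p" using p by blast
  ultimately show ?thesis by blast
qed

lemma adjacent_leaves_impossible:
  assumes "l \<in> leaves V E" "p \<in> leaves V E" "E l p"
  shows False
proof -
  have "E p l" using assms(3) graph by (simp add: simple_graph_def)
  then have only_l: "\<And>q. E l q \<Longrightarrow> q = p" and only_p: "\<And>q. E p q \<Longrightarrow> q = l"
    using assms(3) leaf_unique_neighbour[OF assms(1)] leaf_unique_neighbour[OF assms(2)]
    by blast+
  have "component V E l \<subseteq> {l, p}"
  proof
    fix w assume "w \<in> component V E l"
    then have "(\<lambda>x y. x \<in> V \<and> y \<in> V \<and> E x y)\<^sup>*\<^sup>* l w" by (simp add: component_def)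
    then show "w \<in> {l, p}" by (induction rule: rtranclp_induct) (use only_l only_p in blast)+
  qed
  then have "is_clique E (component V E l)"
    using assms(3) \<open>E p l\<close> unfolding is_clique_def by blast
  moreover have "l \<in> V" "l \<notin> Uset V E" using assms(1) by (auto simp: leaves_def)
  ultimately show False by (simp add: Uset_def)
qed

lemma leaf_neighbour_type_1:
  assumes types: "\<forall>v\<in>internal V E. leaf_count V E v = 0 \<or> leaf_count V E v = 1"
    and l: "l \<in> leaves V E" and "E l p"
  shows "p \<in> type_set V E 1"
proof -
  have "p \<in> V" "E p l" using \<open>E l p\<close> graph by (simp_all add: simple_graph_def)
  moreover have "l \<notin> Uset V E" using l by (simp add: leaves_def)
  then have "p \<notin> Uset V E" using \<open>E l p\<close> Uset_closed_under_edges[of p l] by blast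
  moreover have "p \<notin> leaves V E"
    using adjacent_leaves_impossible[OF l _ \<open>E l p\<close>] by blast
  ultimately have "p \<in> internal V E" by (simp add: internal_def leaves_def)
  have "{u \<in> leaves V E. E p u} \<subseteq> V" by (auto simp: leaves_def)
  then have "finite {u \<in> leaves V E. E p u}"
    using graph finite_subset by (auto simp: simple_graph_def)
  moreover have "l \<in> {u \<in> leaves V E. E p u}" using l \<open>E p l\<close> by blast
  ultimately have "leaf_count V E p \<noteq> 0" unfolding leaf_count_def by (metis card_0_eq empty_iff)
  moreover have "leaf_count V E p = 0 \<or> leaf_count V E p = 1"
    using types \<open>p \<in> internal V E\<close> by blast
  ultimately show ?thesis using \<open>p \<in> internal V E\<close> by (simp add: type_set_def)
qed

lemma leaf_partner_type_1:
  assumes "b \<in> type_set V E 1"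
  shows "leaf_partner V E b \<in> leaves V E" "E b (leaf_partner V E b)"
    and "\<And>l. l \<in> leaves V E \<Longrightarrow> E b l \<Longrightarrow> l = leaf_partner V E b"
proof -
  have "card {u \<in> leaves V E. E b u} = 1"
    using assms by (simp add: type_set_def leaf_count_def)
  then obtain l0 where l0: "{u \<in> leaves V E. E b u} = {l0}" by (metis card_1_singletonE)
  then have "l0 \<in> leaves V E \<and> E b l0" by blast
  then have partner: "leaf_partner V E b \<in> leaves V E \<and> E b (leaf_partner V E b)"
    unfolding leaf_partner_def by (rule someI)
  then show "leaf_partner V E b \<in> leaves V E" "E b (leaf_partner V E b)" by blast+
  fix l assume "l \<in> leaves V E" "E b l"
  then have "l \<in> {u \<in> leaves V E. E b u}" "leaf_partner V E b \<in> {u \<in> leaves V E. E b u}"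
    using partner by simp_all
  then show "l = leaf_partner V E b" by (simp add: l0)
qed

lemma pendant_leaves_type_decomposition:
  assumes types: "\<forall>v\<in>internal V E. leaf_count V E v = 0 \<or> leaf_count V E v = 1"
  shows "pendant_leaves V E (type_set V E 0) (type_set V E 1) (leaves V E) (leaf_partner V E)"
proof
  have sym: "\<And>u v. E u v \<Longrightarrow> E v u" using graph by (simp add: simple_graph_def)
  have V_split: "V = internal V E \<union> leaves V E \<union> Uset V E"
    by (auto simp: internal_def leaves_def Uset_def)
  have disjoint: "internal V E \<inter> Uset V E = {}" "leaves V E \<inter> Uset V E = {}"
    "internal V E \<inter> leaves V E = {}"
    by (auto simp: internal_def leaves_def)
  show "simple_graph V E" by (rule graph)
  show "V = type_set V E 0 \<union> type_set V E 1 \<union> leaves V E"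
    using types V_split by (auto simp: type_set_def)
  show "type_set V E 0 \<inter> type_set V E 1 = {}" "type_set V E 0 \<inter> leaves V E = {}"
    "type_set V E 1 \<inter> leaves V E = {}"
    using disjoint by (auto simp: type_set_def)
  show "\<And>b. b \<in> type_set V E 1 \<Longrightarrow> E b (leaf_partner V E b)"
    using leaf_partner_type_1(2) .
  show leaf_edge: "q \<in> type_set V E 1 \<and> leaf_partner V E q = l"
    if l: "l \<in> leaves V E" and "E l q" for l q
  proof -
    have "q \<in> type_set V E 1" by (rule leaf_neighbour_type_1[OF types l \<open>E l q\<close>])
    moreover have "l = leaf_partner V E q"
      using leaf_partner_type_1(3)[OF \<open>q \<in> type_set V E 1\<close> l sym[OF \<open>E l q\<close>]] .
    ultimately show ?thesis by simp
  qed
  show "bij_betw (leaf_partner V E) (type_set V E 1) (leaves V E)"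
  proof (rule bij_betw_imageI)
    show "inj_on (leaf_partner V E) (type_set V E 1)"
    proof
      fix b1 b2 assume b: "b1 \<in> type_set V E 1" "b2 \<in> type_set V E 1"
        and eq: "leaf_partner V E b1 = leaf_partner V E b2"
      have "E (leaf_partner V E b1) b1" "E (leaf_partner V E b1) b2"
        using leaf_partner_type_1(2)[OF b(1)] leaf_partner_type_1(2)[OF b(2)] eq sym by simp_all
      with leaf_unique_neighbour[OF leaf_partner_type_1(1)[OF b(1)]] show "b1 = b2" by blast
    qed
    show "leaf_partner V E ` type_set V E 1 = leaves V E"
    proof
      show "leaf_partner V E ` type_set V E 1 \<subseteq> leaves V E"
        using leaf_partner_type_1(1) by blast
      show "leaves V E \<subseteq> leaf_partner V E ` type_set V E 1"
      proof
        fix l assume l: "l \<in> leaves V E"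
        then obtain q where "E l q" using leaf_unique_neighbour by blast
        with leaf_edge[OF l this] show "l \<in> leaf_partner V E ` type_set V E 1" by force
      qed
    qed
  qed
qed

end

lemma well_covered_iff_alpha_less: "finite S \<Longrightarrow> well_covered S E \<longleftrightarrow> alpha S E < imin S E + 1"
  using imin_le_alpha[of S E] by (auto simp: well_covered_def mu_alpha_def)

lemma mu_alpha_le_1_iff: "mu_alpha S E \<le> 1 \<longleftrightarrow> alpha S E < imin S E + 2"
  by (auto simp: mu_alpha_def)

theorem corollary10:
  fixes V :: "'a set" and E :: "'a \<Rightarrow> 'a \<Rightarrow> bool"
  assumes "simple_graph V E"
    and "\<forall>v\<in>internal V E. leaf_count V E v = 0 \<or> leaf_count V E v = 1"
  shows "(well_covered V E \<longleftrightarrow>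
            well_covered (type_set V E 0) E \<and>
            (\<forall>I. indep (type_set V E 1) E I \<and> card I \<le> max_comp_size (type_set V E 0) E \<longrightarrow>
                 imin (type_set V E 0 - nbhd_set V E I) E = alpha (type_set V E 0) E))
       \<and> (mu_alpha V E \<le> 1 \<longleftrightarrow>
            mu_alpha (type_set V E 0) E \<le> 1 \<and>
            (\<forall>I. indep (type_set V E 1) E I \<and> card I \<le> 2 * max_comp_size (type_set V E 0) E \<longrightarrow>
                 int (alpha (type_set V E 0) E) - int (imin (type_set V E 0 - nbhd_set V E I) E) \<le> 1))"
proof -
  interpret pendant_leaves V E "type_set V E 0" "type_set V E 1" "leaves V E" "leaf_partner V E"
    by (rule pendant_leaves_type_decomposition[OF assms])
  let ?A = "type_set V E 0" and ?B = "type_set V E 1" and ?n0 = "max_comp_size (type_set V E 0) E"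
  let ?t = "\<lambda>I. imin (?A - nbhd_set V E I) E"
  have t_le: "?t I \<le> alpha ?A E" for I
    using imin_le_alpha[of "?A - nbhd_set V E I" E] alpha_mono[OF finite_parts(1), of "?A - nbhd_set V E I" E]
      finite_parts(1) by simp
  have t_empty: "?t {} = imin ?A E" by (simp add: nbhd_set_def)
  have "well_covered V E \<longleftrightarrow>
      (\<forall>I. indep ?B E I \<and> card I \<le> ?n0 \<longrightarrow> alpha ?A E < ?t I + 1)"
    using alpha_less_imin_add_iff[of 1] well_covered_iff_alpha_less[OF finite_V] by simp
  moreover have "well_covered ?A E \<longleftrightarrow> alpha ?A E < ?t {} + 1"
    using t_empty well_covered_iff_alpha_less[OF finite_parts(1)] by simp
  moreover have "alpha ?A E < ?t I + 1 \<longleftrightarrow> ?t I = alpha ?A E" for I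
    using t_le[of I] by linarith
  ultimately have part1: "well_covered V E \<longleftrightarrow> well_covered ?A E \<and>
      (\<forall>I. indep ?B E I \<and> card I \<le> ?n0 \<longrightarrow> ?t I = alpha ?A E)"
    using indep_empty[of ?B E] by (metis card.empty le0)
  have "mu_alpha V E \<le> 1 \<longleftrightarrow>
      (\<forall>I. indep ?B E I \<and> card I \<le> 2 * ?n0 \<longrightarrow> alpha ?A E < ?t I + 2)"
    unfolding mu_alpha_le_1_iff using alpha_less_imin_add_iff[of 2] by simp
  moreover have "mu_alpha ?A E \<le> 1 \<longleftrightarrow> alpha ?A E < ?t {} + 2"
    unfolding mu_alpha_le_1_iff using t_empty by simp
  moreover have "int (alpha ?A E) - int (?t I) \<le> 1 \<longleftrightarrow> alpha ?A E < ?t I + 2" for I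
    by linarith
  ultimately have part2: "mu_alpha V E \<le> 1 \<longleftrightarrow> mu_alpha ?A E \<le> 1 \<and>
      (\<forall>I. indep ?B E I \<and> card I \<le> 2 * ?n0 \<longrightarrow> int (alpha ?A E) - int (?t I) \<le> 1)"
    using indep_empty[of ?B E] by (metis card.empty le0)
  from part1 part2 show ?thesis by blast
qed

end
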